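(* Let $f:\mathbb{R}^d\to\mathbb{R}$ be twice continuously differentiable with $mI_d\preceq\nabla^2f\preceq LI_d$, let $u=1/L$, and let $R\ge1$, $\delta>0$ with $h=R\delta$ and $R^4\delta^4\le\frac14$. Consider iteration $n$ of Algorithm 2 (context) started at given $(x_n,v_n)$, and let $(x_n^*(t),v_n^*(t))_{t\in[0,h]}$ be the underdamped Langevin diffusion started at $(x_n,v_n)$, driven by the same Brownian motion as the iteration. Then for any $i=1,\dots,R$ and $k=1,\dots,K-1$, $$\mathbb{E}\|x_n^{(k,i)}-x_n^*(\alpha_ih)\|^2\le(2R^4\delta^4)^k\frac1R\sum_{j=1}^R\mathbb{E}\|x_n-x_n^*(\alpha_jh)\|^2+4R^3\delta^4\sum_{j=1}^R\mathbb{E}\sup_{s\in[(j-1)\delta,j\delta]}\|x_n^*(\alpha_jh)-x_n^*(s)\|^2.$$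
   Context: Underdamped Langevin diffusion: $dv=-2v\,dt-u\nabla f(x)dt+2\sqrt u\,dB_t$, $dx=v\,dt$. Iteration $n$ of Algorithm 2 with parameters $h,R,K$, $\delta=h/R$: sample independently $\alpha_i\sim U[\frac{i-1}R,\frac iR]$, $i=1,\dots,R$, and a standard $d$-dimensional Brownian motion $(B_s)_{s\in[0,h]}$; set $W_{1,i}=\int_0^{\alpha_ih}(1-e^{-2(\alpha_ih-s)})dB_s$; set $x_n^{(0,i)}=x_n$ and for $k=1,\dots,K-1$, $i=1,\dots,R$: $x_n^{(k,i)}=x_n+\frac12(1-e^{-2\alpha_ih})v_n-\frac12u\sum_{j=1}^i\left[\int_{(j-1)\delta}^{\min(j\delta,\alpha_ih)}(1-e^{-2(\alpha_ih-s)})ds\cdot\nabla f(x_n^{(k-1,j)})\right]+\sqrt uW_{1,i}$. *)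

theory Defs
  imports "HOL-Probability.Probability"
begin

definition std_brownian_motion ::
  "'w measure \<Rightarrow> real \<Rightarrow> (real \<Rightarrow> 'w \<Rightarrow> 'a::euclidean_space) \<Rightarrow> bool" where
  "std_brownian_motion M T B \<longleftrightarrow>
     prob_space M \<and>
     (\<forall>t\<in>{0..T}. B t \<in> borel_measurable M) \<and>
     (\<forall>\<omega>\<in>space M. B 0 \<omega> = 0 \<and> continuous_on {0..T} (\<lambda>t. B t \<omega>)) \<and>
     (\<forall>s t. 0 \<le> s \<and> s < t \<and> t \<le> T \<longrightarrow>
        (\<forall>b\<in>Basis. distributed M lborel (\<lambda>\<omega>. (B t \<omega> - B s \<omega>) \<bullet> b)
                       (normal_density 0 (sqrt (t - s))))) \<and>
     (\<forall>(ts :: nat \<Rightarrow> real) n. 0 \<le> ts 0 \<and> (\<forall>k<n. ts k \<le> ts (Suc k)) \<and> ts n \<le> T \<longrightarrow>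
        prob_space.indep_vars M (\<lambda>_. borel)
          (\<lambda>(k, b) \<omega>. (B (ts (Suc k)) \<omega> - B (ts k) \<omega>) \<bullet> b) ({..<n} \<times> Basis))"

text \<open>Wiener integral of a deterministic C^1 integrand g (with derivative g') against a
  continuous path b on [0,t], defined pathwise by integration by parts:
  int_0^t g(s) db_s = g(t) b(t) - g(0) b(0) - int_0^t g'(s) b(s) ds.
  (For a Brownian path this coincides almost surely with the Ito integral.)\<close>
definition wiener_integral ::
  "(real \<Rightarrow> real) \<Rightarrow> (real \<Rightarrow> real) \<Rightarrow> (real \<Rightarrow> 'a::euclidean_space) \<Rightarrow> real \<Rightarrow> 'a" where
  "wiener_integral g g' b t = g t *\<^sub>R b t - g 0 *\<^sub>R b 0 - integral {0..t} (\<lambda>s. g' s *\<^sub>R b s)"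

definition W1 :: "(real \<Rightarrow> 'a::euclidean_space) \<Rightarrow> real \<Rightarrow> 'a" where
  "W1 b t = wiener_integral (\<lambda>s. 1 - exp (- 2 * (t - s))) (\<lambda>s. - 2 * exp (- 2 * (t - s))) b t"

text \<open>Inner iterates x_n^{(k,i)} of Algorithm 2 (for one realisation):
  g = gradient of f, a i = alpha_i, W i = W_{1,i}, delta = h / R.\<close>
primrec alg2_iter ::
  "('a::euclidean_space \<Rightarrow> 'a) \<Rightarrow> real \<Rightarrow> real \<Rightarrow> nat \<Rightarrow> 'a \<Rightarrow> 'a \<Rightarrow> (nat \<Rightarrow> real) \<Rightarrow> (nat \<Rightarrow> 'a)
     \<Rightarrow> nat \<Rightarrow> nat \<Rightarrow> 'a" where
  "alg2_iter g u h R x v a W 0 i = x"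
| "alg2_iter g u h R x v a W (Suc k) i =
     x + ((1 - exp (- 2 * (a i * h))) / 2) *\<^sub>R v
     - (u / 2) *\<^sub>R (\<Sum>j=1..i.
          integral {(real j - 1) * (h / real R) .. min (real j * (h / real R)) (a i * h)}
                   (\<lambda>s. 1 - exp (- 2 * (a i * h - s)))
          *\<^sub>R g (alg2_iter g u h R x v a W k j))
     + sqrt u *\<^sub>R W i"

end

theory Submission
  imports Defs
begin

text \<open>
  The iterate x_n^(k,i) and the variation-of-constants form of the diffusion,
  x*(t) = x_n + (1 - e^(-2t))/2 v_n - u/2 int_0^t (1 - e^(-2(t-s))) grad f(x*(s)) ds + sqrt u W_1(t),
  have the same noise term, so they differ only in the drift integral.  Splitting int_0^(alpha_i h)
  into the cells [(j-1) delta, j delta] and using |1 - e^(-2(t-s))| <= 2h, the L-Lipschitz continuity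
  of grad f (co-coercivity of a convex L-smooth function) and u = 1/L gives, pathwise,
  e_(k+1)(i) <= h delta sum_j (e_k(j) + S_j), where e_k(j) = |x_n^(k,j) - x*(alpha_j h)| and S_j is
  the oscillation of x* on the j-th cell.  By Cauchy-Schwarz, e_(k+1)(i)^2 <= q b_k + C with
  q = 2 R^4 delta^4 <= 1/2, b_k the mean of the e_k(j)^2 and C = 2 R^3 delta^4 sum_j S_j^2, and
  iterating this affine recursion gives e_k(i)^2 <= q^k b_0 + 2C.  Taking expectations (the diffusion
  evaluated at the random times alpha_j h is measurable since its paths are continuous) proves the
  claim.
\<close>

section \<open>Convex functions with Lipschitz gradient\<close>

lemma has_real_derivative_along_line:
  fixes F :: "'a::real_normed_vector \<Rightarrow> real"
  assumes "(F has_derivative F') (at (x + s *\<^sub>R d))"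
  shows "((\<lambda>s. F (x + s *\<^sub>R d)) has_real_derivative F' d) (at s)"
proof -
  have "((\<lambda>s. x + s *\<^sub>R d) has_derivative (\<lambda>e. e *\<^sub>R d)) (at s)"
    by (auto intro!: derivative_eq_intros)
  from has_derivative_compose[OF this assms]
  have "((\<lambda>s. F (x + s *\<^sub>R d)) has_derivative (\<lambda>e. F' (e *\<^sub>R d))) (at s)" .
  moreover have "(\<lambda>e. F' (e *\<^sub>R d)) = (*) (F' d)"
    using linear_scale[OF has_derivative_linear[OF assms]] by (auto simp: mult.commute)
  ultimately show ?thesis
    by (simp add: has_field_derivative_def)
qed

lemma grad_increment_along_line_bounds:
  fixes grad :: "'a::real_inner \<Rightarrow> 'a"
  assumes hess: "\<And>x. (grad has_derivative H x) (at x)"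
    and psd: "\<And>x w. 0 \<le> H x w \<bullet> w"
    and upper: "\<And>x w. H x w \<bullet> w \<le> L * (norm w)\<^sup>2"
    and t: "0 \<le> t"
  shows "0 \<le> (grad (x + t *\<^sub>R d) - grad x) \<bullet> d"
    and "(grad (x + t *\<^sub>R d) - grad x) \<bullet> d \<le> L * t * (norm d)\<^sup>2"
proof -
  have deriv: "((\<lambda>s. grad (x + s *\<^sub>R d) \<bullet> d) has_real_derivative H (x + s *\<^sub>R d) d \<bullet> d) (at s)" for s
    by (rule has_real_derivative_along_line) (auto intro!: derivative_eq_intros hess)
  have "grad (x + 0 *\<^sub>R d) \<bullet> d \<le> grad (x + t *\<^sub>R d) \<bullet> d"
    using deriv psd by (intro DERIV_nonneg_imp_nondecreasing[OF t]) blast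
  then show "0 \<le> (grad (x + t *\<^sub>R d) - grad x) \<bullet> d"
    by (simp add: inner_diff_left)
  have "grad (x + t *\<^sub>R d) \<bullet> d - L * t * (norm d)\<^sup>2 \<le> grad (x + 0 *\<^sub>R d) \<bullet> d - L * 0 * (norm d)\<^sup>2"
  proof (rule DERIV_nonpos_imp_nonincreasing[OF t])
    fix s
    have "((\<lambda>s. grad (x + s *\<^sub>R d) \<bullet> d - L * s * (norm d)\<^sup>2) has_real_derivative
        H (x + s *\<^sub>R d) d \<bullet> d - L * (norm d)\<^sup>2) (at s)"
      by (auto intro!: derivative_eq_intros deriv)
    then show "\<exists>y. ((\<lambda>s. grad (x + s *\<^sub>R d) \<bullet> d - L * s * (norm d)\<^sup>2) has_real_derivative y) (at s) \<and> y \<le> 0"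
      using upper[of "x + s *\<^sub>R d" d] by force
  qed
  then show "(grad (x + t *\<^sub>R d) - grad x) \<bullet> d \<le> L * t * (norm d)\<^sup>2"
    by (simp add: inner_diff_left)
qed

lemma smooth_convex_first_order_bounds:
  fixes f :: "'a::real_inner \<Rightarrow> real"
  assumes grad_f: "\<And>x. (f has_derivative (\<lambda>w. grad x \<bullet> w)) (at x)"
    and hess: "\<And>x. (grad has_derivative H x) (at x)"
    and psd: "\<And>x w. 0 \<le> H x w \<bullet> w"
    and upper: "\<And>x w. H x w \<bullet> w \<le> L * (norm w)\<^sup>2"
  shows "f x + grad x \<bullet> d \<le> f (x + d)"
    and "f (x + d) \<le> f x + grad x \<bullet> d + L / 2 * (norm d)\<^sup>2"
proof -
  have deriv: "((\<lambda>s. f (x + s *\<^sub>R d)) has_real_derivative grad (x + s *\<^sub>R d) \<bullet> d) (at s)" for s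
    by (rule has_real_derivative_along_line[OF grad_f])
  note increment = grad_increment_along_line_bounds[OF hess psd upper]
  have "f (x + 0 *\<^sub>R d) - 0 * (grad x \<bullet> d) \<le> f (x + 1 *\<^sub>R d) - 1 * (grad x \<bullet> d)"
  proof (rule DERIV_nonneg_imp_nondecreasing[of 0 1])
    fix s :: real assume "0 \<le> s"
    have "((\<lambda>s. f (x + s *\<^sub>R d) - s * (grad x \<bullet> d)) has_real_derivative
        grad (x + s *\<^sub>R d) \<bullet> d - grad x \<bullet> d) (at s)"
      by (auto intro!: derivative_eq_intros deriv)
    then show "\<exists>y. ((\<lambda>s. f (x + s *\<^sub>R d) - s * (grad x \<bullet> d)) has_real_derivative y) (at s) \<and> 0 \<le> y"
      using increment(1)[OF \<open>0 \<le> s\<close>, of x d] by (auto simp: inner_diff_left)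
  qed simp
  then show "f x + grad x \<bullet> d \<le> f (x + d)"
    by simp
  have "f (x + 1 *\<^sub>R d) - 1 * (grad x \<bullet> d) - L / 2 * 1\<^sup>2 * (norm d)\<^sup>2
      \<le> f (x + 0 *\<^sub>R d) - 0 * (grad x \<bullet> d) - L / 2 * 0\<^sup>2 * (norm d)\<^sup>2"
  proof (rule DERIV_nonpos_imp_nonincreasing[of 0 1])
    fix s :: real assume "0 \<le> s"
    have "((\<lambda>s. f (x + s *\<^sub>R d) - s * (grad x \<bullet> d) - L / 2 * s\<^sup>2 * (norm d)\<^sup>2) has_real_derivative
        grad (x + s *\<^sub>R d) \<bullet> d - grad x \<bullet> d - L * s * (norm d)\<^sup>2) (at s)"
      by (auto intro!: derivative_eq_intros deriv)
    then show "\<exists>y. ((\<lambda>s. f (x + s *\<^sub>R d) - s * (grad x \<bullet> d) - L / 2 * s\<^sup>2 * (norm d)\<^sup>2)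
        has_real_derivative y) (at s) \<and> y \<le> 0"
      using increment(2)[OF \<open>0 \<le> s\<close>, of x d] by (auto simp: inner_diff_left)
  qed simp
  then show "f (x + d) \<le> f x + grad x \<bullet> d + L / 2 * (norm d)\<^sup>2"
    by simp
qed

lemma smooth_convex_bregman_lower_bound:
  fixes f :: "'a::real_inner \<Rightarrow> real"
  assumes grad_f: "\<And>x. (f has_derivative (\<lambda>w. grad x \<bullet> w)) (at x)"
    and hess: "\<And>x. (grad has_derivative H x) (at x)"
    and psd: "\<And>x w. 0 \<le> H x w \<bullet> w"
    and upper: "\<And>x w. H x w \<bullet> w \<le> L * (norm w)\<^sup>2"
    and L_pos: "0 < L"
  shows "(norm (grad y - grad x))\<^sup>2 / (2 * L) \<le> f y - f x - grad x \<bullet> (y - x)"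
proof -
  note bounds = smooth_convex_first_order_bounds[OF grad_f hess psd upper]
  define e where "e = grad y - grad x"
  \<comment> \<open>Compare both first-order bounds at the point one gradient step away from y.\<close>
  define z where "z = y - (1 / L) *\<^sub>R e"
  have "f x + grad x \<bullet> (z - x) \<le> f z"
    using bounds(1)[of x "z - x"] by simp
  moreover have "f z \<le> f y + grad y \<bullet> (z - y) + L / 2 * (norm (z - y))\<^sup>2"
    using bounds(2)[of y "z - y"] by simp
  moreover have "grad y \<bullet> (z - y) - grad x \<bullet> (z - x) + L / 2 * (norm (z - y))\<^sup>2
      = - grad x \<bullet> (y - x) - (norm e)\<^sup>2 / (2 * L)"
  proof -
    have "grad y \<bullet> (z - y) - grad x \<bullet> (z - x) = - grad x \<bullet> (y - x) - (1 / L) * (norm e)\<^sup>2"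
      by (simp add: z_def e_def inner_diff_left inner_diff_right power2_norm_eq_inner algebra_simps)
    moreover have "(norm (z - y))\<^sup>2 = (1 / L)\<^sup>2 * (norm e)\<^sup>2"
      by (simp add: z_def power_divide)
    ultimately show ?thesis
      using L_pos by (simp add: field_simps power2_eq_square)
  qed
  ultimately show ?thesis
    by (simp add: e_def)
qed

lemma smooth_convex_grad_lipschitz:
  fixes f :: "'a::real_inner \<Rightarrow> real"
  assumes grad_f: "\<And>x. (f has_derivative (\<lambda>w. grad x \<bullet> w)) (at x)"
    and hess: "\<And>x. (grad has_derivative H x) (at x)"
    and psd: "\<And>x w. 0 \<le> H x w \<bullet> w"
    and upper: "\<And>x w. H x w \<bullet> w \<le> L * (norm w)\<^sup>2"
    and L_pos: "0 < L"
  shows "norm (grad y - grad x) \<le> L * norm (y - x)"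
proof -
  note bregman = smooth_convex_bregman_lower_bound[OF grad_f hess psd upper L_pos]
  define e where "e = grad y - grad x"
  have "(norm e)\<^sup>2 / L \<le> (f y - f x - grad x \<bullet> (y - x)) + (f x - f y - grad y \<bullet> (x - y))"
    using bregman[of y x] bregman[of x y] by (simp add: e_def norm_minus_commute)
  also have "\<dots> = e \<bullet> (y - x)"
    by (simp add: e_def inner_diff_left inner_diff_right)
  also have "\<dots> \<le> norm e * norm (y - x)"
    by (rule norm_cauchy_schwarz)
  finally have "norm e * norm e \<le> norm e * (L * norm (y - x))"
    using L_pos by (simp add: field_simps power2_eq_square)
  then show ?thesis
    using L_pos by (cases "norm e = 0") (auto simp: e_def)
qed

lemma hessian_bounds_grad_lipschitz:
  fixes f :: "'a::euclidean_space \<Rightarrow> real"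
  assumes grad_f: "\<And>x. (f has_derivative (\<lambda>w. grad x \<bullet> w)) (at x)"
    and hess: "\<And>x. (grad has_derivative H x) (at x)"
    and lower: "\<And>x w. m * (norm w)\<^sup>2 \<le> H x w \<bullet> w" and m: "0 < m"
    and upper: "\<And>x w. H x w \<bullet> w \<le> L * (norm w)\<^sup>2"
  shows "0 < L" and "norm (grad y - grad x) \<le> L * norm (y - x)"
proof -
  obtain b :: 'a where "b \<in> Basis"
    using nonempty_Basis by blast
  then show L_pos: "0 < L"
    using lower[where x=0 and w=b] upper[where x=0 and w=b] m by simp
  have psd: "0 \<le> H x w \<bullet> w" for x w
    using lower[where x=x and w=w] m by (smt (verit) mult_nonneg_nonneg zero_le_power2)
  show "norm (grad y - grad x) \<le> L * norm (y - x)"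
    by (rule smooth_convex_grad_lipschitz[OF grad_f hess psd upper L_pos])
qed

section \<open>The diffusion in variation-of-constants form\<close>

lemma W1_eq_integral:
  fixes b :: "real \<Rightarrow> 'a::euclidean_space"
  assumes "b 0 = 0"
  shows "W1 b t = (2 * exp (- 2 * t)) *\<^sub>R integral {0..t} (\<lambda>s. exp (2 * s) *\<^sub>R b s)"
proof -
  have "W1 b t = - integral {0..t} (\<lambda>s. (- 2 * exp (- 2 * (t - s))) *\<^sub>R b s)"
    by (simp add: W1_def wiener_integral_def assms)
  also have "integral {0..t} (\<lambda>s. (- 2 * exp (- 2 * (t - s))) *\<^sub>R b s)
      = integral {0..t} (\<lambda>s. (- 2 * exp (- 2 * t)) *\<^sub>R (exp (2 * s) *\<^sub>R b s))"
    by (rule integral_cong) (simp add: algebra_simps exp_add[symmetric])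
  also have "\<dots> = (- 2 * exp (- 2 * t)) *\<^sub>R integral {0..t} (\<lambda>s. exp (2 * s) *\<^sub>R b s)"
    by (rule integral_cmul)
  finally show ?thesis
    by simp
qed

lemma langevin_velocity_eq:
  fixes grad :: "'a::euclidean_space \<Rightarrow> 'a" and X V b :: "real \<Rightarrow> 'a"
  assumes gc: "continuous_on UNIV grad"
    and cX: "continuous_on {0..h} X" and cV: "continuous_on {0..h} V"
    and hX: "\<And>t. t \<in> {0..h} \<Longrightarrow> X t = xn + integral {0..t} V"
    and hV: "\<And>t. t \<in> {0..h} \<Longrightarrow>
      V t = vn - integral {0..t} (\<lambda>s. 2 *\<^sub>R V s + u *\<^sub>R grad (X s)) + (2 * sqrt u) *\<^sub>R b t"
    and t: "t \<in> {0..h}"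
  shows "V t = vn - 2 *\<^sub>R (X t - xn) - u *\<^sub>R integral {0..t} (\<lambda>s. grad (X s)) + (2 * sqrt u) *\<^sub>R b t"
proof -
  have "continuous_on {0..t} V" "continuous_on {0..t} (\<lambda>s. grad (X s))"
    using t by (auto intro: continuous_on_subset[OF cV]
        continuous_on_compose2[OF gc continuous_on_subset[OF cX]])
  then have "V integrable_on {0..t}" "(\<lambda>s. grad (X s)) integrable_on {0..t}"
    by (auto intro: integrable_continuous_real)
  then have "integral {0..t} (\<lambda>s. 2 *\<^sub>R V s + u *\<^sub>R grad (X s))
      = 2 *\<^sub>R integral {0..t} V + u *\<^sub>R integral {0..t} (\<lambda>s. grad (X s))"
    by (simp add: integral_add integrable_cmul)
  then show ?thesis
    using hV[OF t] hX[OF t] by (simp add: algebra_simps)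
qed

lemma langevin_integrating_factor:
  fixes grad :: "'a::euclidean_space \<Rightarrow> 'a" and X V b :: "real \<Rightarrow> 'a"
  assumes gc: "continuous_on UNIV grad"
    and cX: "continuous_on {0..h} X" and cV: "continuous_on {0..h} V"
    and cb: "continuous_on {0..h} b"
    and hX: "\<And>t. t \<in> {0..h} \<Longrightarrow> X t = xn + integral {0..t} V"
    and hV: "\<And>t. t \<in> {0..h} \<Longrightarrow>
      V t = vn - integral {0..t} (\<lambda>s. 2 *\<^sub>R V s + u *\<^sub>R grad (X s)) + (2 * sqrt u) *\<^sub>R b t"
    and t: "t \<in> {0..h}"
  shows "exp (2 * t) *\<^sub>R (X t - xn) = ((exp (2 * t) - 1) / 2) *\<^sub>R vn
      - (u / 2) *\<^sub>R (exp (2 * t) *\<^sub>R integral {0..t} (\<lambda>s. grad (X s))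
                     - integral {0..t} (\<lambda>s. exp (2 * s) *\<^sub>R grad (X s)))
      + (2 * sqrt u) *\<^sub>R integral {0..t} (\<lambda>s. exp (2 * s) *\<^sub>R b s)"
proof -
  define G where "G = (\<lambda>s. grad (X s))"
  define IG where "IG s = integral {0..s} G" for s
  define IE where "IE s = integral {0..s} (\<lambda>r. exp (2 * r) *\<^sub>R G r)" for s
  define IB where "IB s = integral {0..s} (\<lambda>r. exp (2 * r) *\<^sub>R b r)" for s
  \<comment> \<open>D s is the difference of the two sides of the claim at time s; it vanishes at 0 and,
    by the velocity equation, has derivative 0.\<close>
  define D where "D s = exp (2 * s) *\<^sub>R (X s - xn) - ((exp (2 * s) - 1) / 2) *\<^sub>R vn
      + (u / 2) *\<^sub>R (exp (2 * s) *\<^sub>R IG s - IE s) - (2 * sqrt u) *\<^sub>R IB s" for s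
  have cG: "continuous_on {0..h} G"
    unfolding G_def by (rule continuous_on_compose2[OF gc cX]) auto
  have cEG: "continuous_on {0..h} (\<lambda>r. exp (2 * r) *\<^sub>R G r)"
    and cEb: "continuous_on {0..h} (\<lambda>r. exp (2 * r) *\<^sub>R b r)"
    by (intro continuous_intros cG cb)+
  have "(D has_vector_derivative 0) (at s within {0..t})" if "s \<in> {0..t}" for s
  proof -
    have s: "s \<in> {0..h}"
      using that t by auto
    have dX: "(X has_vector_derivative V s) (at s within {0..h})"
    proof (rule has_vector_derivative_transform[OF s])
      show "((\<lambda>s. xn + integral {0..s} V) has_vector_derivative V s) (at s within {0..h})"
        using integral_has_vector_derivative[OF cV s] by (auto intro!: derivative_eq_intros)
    qed (use hX in auto)
    have "(D has_vector_derivative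
        exp (2 * s) *\<^sub>R (V s + 2 *\<^sub>R (X s - xn) - vn + u *\<^sub>R IG s - (2 * sqrt u) *\<^sub>R b s))
        (at s within {0..h})"
      unfolding D_def IG_def IE_def IB_def
      by (rule has_vector_derivative_eq_rhs,
          (rule derivative_eq_intros refl dX integral_has_vector_derivative[OF cG s]
            integral_has_vector_derivative[OF cEG s] integral_has_vector_derivative[OF cEb s]
            | simp)+,
          simp add: algebra_simps)
    then show ?thesis
      using langevin_velocity_eq[OF gc cX cV hX hV s] t
      by (auto simp: IG_def G_def intro: has_vector_derivative_within_subset)
  qed
  then have "((\<lambda>_. 0) has_integral (D t - D 0)) {0..t}"
    using t by (intro fundamental_theorem_of_calculus) auto
  moreover have "D 0 = 0"
    using hX t by (simp add: D_def IG_def IE_def IB_def)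
  ultimately have "D t = 0"
    by simp
  then show ?thesis
    by (simp add: D_def IG_def IE_def IB_def G_def algebra_simps)
qed

lemma langevin_position_mild_form:
  fixes grad :: "'a::euclidean_space \<Rightarrow> 'a" and X V b :: "real \<Rightarrow> 'a"
  assumes gc: "continuous_on UNIV grad"
    and cX: "continuous_on {0..h} X" and cV: "continuous_on {0..h} V"
    and cb: "continuous_on {0..h} b" and b0: "b 0 = 0"
    and hX: "\<And>t. t \<in> {0..h} \<Longrightarrow> X t = xn + integral {0..t} V"
    and hV: "\<And>t. t \<in> {0..h} \<Longrightarrow>
      V t = vn - integral {0..t} (\<lambda>s. 2 *\<^sub>R V s + u *\<^sub>R grad (X s)) + (2 * sqrt u) *\<^sub>R b t"
    and t: "t \<in> {0..h}"
  shows "X t = xn + ((1 - exp (- 2 * t)) / 2) *\<^sub>R vn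
      - (u / 2) *\<^sub>R integral {0..t} (\<lambda>s. (1 - exp (- 2 * (t - s))) *\<^sub>R grad (X s))
      + sqrt u *\<^sub>R W1 b t"
proof -
  have cG: "continuous_on {0..t} (\<lambda>s. grad (X s))"
    using t by (intro continuous_on_compose2[OF gc continuous_on_subset[OF cX]]) auto
  then have iG: "(\<lambda>s. grad (X s)) integrable_on {0..t}"
    and iE: "(\<lambda>s. exp (2 * s) *\<^sub>R grad (X s)) integrable_on {0..t}"
    by (auto intro!: integrable_continuous_real continuous_intros)
  have "integral {0..t} (\<lambda>s. (1 - exp (- 2 * (t - s))) *\<^sub>R grad (X s))
      = integral {0..t} (\<lambda>s. grad (X s) - exp (- 2 * t) *\<^sub>R (exp (2 * s) *\<^sub>R grad (X s)))"
    by (rule integral_cong) (simp add: algebra_simps exp_add[symmetric])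
  also have "\<dots> = integral {0..t} (\<lambda>s. grad (X s))
      - exp (- 2 * t) *\<^sub>R integral {0..t} (\<lambda>s. exp (2 * s) *\<^sub>R grad (X s))"
    by (simp only: integral_diff[OF iG integrable_cmul[OF iE]] integral_cmul)
  finally have weighted: "integral {0..t} (\<lambda>s. (1 - exp (- 2 * (t - s))) *\<^sub>R grad (X s))
      = integral {0..t} (\<lambda>s. grad (X s))
        - exp (- 2 * t) *\<^sub>R integral {0..t} (\<lambda>s. exp (2 * s) *\<^sub>R grad (X s))" .
  have "X t = xn + exp (- 2 * t) *\<^sub>R (exp (2 * t) *\<^sub>R (X t - xn))"
    by (simp add: exp_add[symmetric])
  also note langevin_integrating_factor[OF gc cX cV cb hX hV t]
  finally show ?thesis
    unfolding weighted W1_eq_integral[of b, OF b0]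
    by (simp add: algebra_simps exp_add[symmetric] diff_divide_distrib)
qed

section \<open>Pathwise error of the inner iteration\<close>

lemma integral_sum_cells:
  fixes \<phi> :: "real \<Rightarrow> 'a::banach"
  assumes d: "0 < d" and i: "1 \<le> i" and t: "(real i - 1) * d \<le> t"
    and \<phi>: "continuous_on {0..t} \<phi>"
  shows "(\<Sum>j=1..i. integral {(real j - 1) * d .. min (real j * d) t} \<phi>)
    = integral {0..min (real i * d) t} \<phi>"
  using i t
proof (induction i rule: dec_induct)
  case base
  then show ?case
    by simp
next
  case (step i)
  then have "real i * d \<le> t"
    by simp
  moreover have "\<phi> integrable_on {0..min (real (Suc i) * d) t}"
    by (intro integrable_continuous_real continuous_on_subset[OF \<phi>]) auto
  moreover have "(real i - 1) * d \<le> t"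
    using \<open>real i * d \<le> t\<close> d by (simp add: left_diff_distrib)
  ultimately show ?case
    using step.IH d
    by (simp add: min_absorb1 Henstock_Kurzweil_Integration.integral_combine algebra_simps)
qed

lemma norm_integral_weighted_diff_le:
  fixes w :: "real \<Rightarrow> real" and G :: "real \<Rightarrow> 'a::euclidean_space"
  assumes ab: "a \<le> b" "b - a \<le> d" and w: "continuous_on {a..b} w" and G: "continuous_on {a..b} G"
    and bound: "\<And>s. s \<in> {a..b} \<Longrightarrow> \<bar>w s\<bar> * norm (g - G s) \<le> C"
  shows "norm (integral {a..b} w *\<^sub>R g - integral {a..b} (\<lambda>s. w s *\<^sub>R G s)) \<le> C * d"
proof -
  have integral: "((\<lambda>s. w s *\<^sub>R g - w s *\<^sub>R G s) has_integral
      integral {a..b} w *\<^sub>R g - integral {a..b} (\<lambda>s. w s *\<^sub>R G s)) {a..b}"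
    using w G by (intro has_integral_diff has_integral_scaleR_left integrable_integral
        integrable_continuous_real continuous_intros)
  have C: "0 \<le> C"
    using bound[of a] ab by (smt (verit) atLeastAtMost_iff mult_nonneg_nonneg norm_ge_zero)
  moreover have "norm (w s *\<^sub>R g - w s *\<^sub>R G s) \<le> C" if "s \<in> {a..b}" for s
    using bound[OF that] by (simp add: scaleR_diff_right[symmetric])
  ultimately have "norm (integral {a..b} w *\<^sub>R g - integral {a..b} (\<lambda>s. w s *\<^sub>R G s)) \<le> C * (b - a)"
    using has_integral_bound_real[OF _ finite.emptyI integral] ab by simp
  also have "\<dots> \<le> C * d"
    using ab(2) C by (rule mult_left_mono)
  finally show ?thesis .
qed

lemma abs_one_minus_exp_le:
  fixes r :: real
  assumes "0 \<le> r"
  shows "\<bar>1 - exp (- 2 * r)\<bar> \<le> 2 * r"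
  using exp_ge_add_one_self[of "- 2 * r"] assms by auto

lemma cell_subset_horizon:
  assumes "j \<in> {1..R}" and "0 < \<delta>"
  shows "{(real j - 1) * \<delta> .. real j * \<delta>} \<subseteq> {0..real R * \<delta>}"
proof -
  have "0 \<le> (real j - 1) * \<delta>" "real j * \<delta> \<le> real R * \<delta>"
    using assms by (auto intro: mult_right_mono)
  then show ?thesis
    by auto
qed

lemma alg2_iter_Suc_sub_mild:
  fixes grad :: "'a::euclidean_space \<Rightarrow> 'a" and X Wf :: "real \<Rightarrow> 'a" and a :: "nat \<Rightarrow> real"
  assumes grad_cont: "continuous_on UNIV grad" and cX: "continuous_on {0..h} X"
    and mild: "\<And>t. t \<in> {0..h} \<Longrightarrow> X t = xn + ((1 - exp (- 2 * t)) / 2) *\<^sub>R vn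
          - (u / 2) *\<^sub>R integral {0..t} (\<lambda>s. (1 - exp (- 2 * (t - s))) *\<^sub>R grad (X s))
          + sqrt u *\<^sub>R Wf t"
    and \<delta>: "0 < \<delta>" and h: "h = real R * \<delta>"
    and i: "i \<in> {1..R}" and t: "a i * h \<in> {(real i - 1) * \<delta> .. real i * \<delta>}"
  shows "alg2_iter grad u h R xn vn a (\<lambda>j. Wf (a j * h)) (Suc k) i - X (a i * h)
    = - (u / 2) *\<^sub>R (\<Sum>j=1..i.
        integral {(real j - 1) * \<delta> .. min (real j * \<delta>) (a i * h)} (\<lambda>s. 1 - exp (- 2 * (a i * h - s)))
          *\<^sub>R grad (alg2_iter grad u h R xn vn a (\<lambda>j. Wf (a j * h)) k j)
        - integral {(real j - 1) * \<delta> .. min (real j * \<delta>) (a i * h)}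
            (\<lambda>s. (1 - exp (- 2 * (a i * h - s))) *\<^sub>R grad (X s)))"
proof -
  define t where "t = a i * h"
  define w where "w = (\<lambda>s. 1 - exp (- 2 * (t - s)))"
  define J where "J j = {(real j - 1) * \<delta> .. min (real j * \<delta>) t}" for j :: nat
  have t_range: "0 \<le> t" "t \<le> h"
    using cell_subset_horizon[OF i \<delta>] t by (auto simp: h t_def)
  have "continuous_on {0..t} (\<lambda>s. w s *\<^sub>R grad (X s))"
    unfolding w_def using t_range
    by (intro continuous_intros continuous_on_compose2[OF grad_cont continuous_on_subset[OF cX]]) auto
  from integral_sum_cells[OF \<delta> _ _ this] i t
  have "(\<Sum>j=1..i. integral (J j) (\<lambda>s. w s *\<^sub>R grad (X s))) = integral {0..t} (\<lambda>s. w s *\<^sub>R grad (X s))"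
    by (simp add: J_def t_def min_absorb2)
  then have X_t: "X t = xn + ((1 - exp (- 2 * t)) / 2) *\<^sub>R vn
      - (u / 2) *\<^sub>R (\<Sum>j=1..i. integral (J j) (\<lambda>s. w s *\<^sub>R grad (X s))) + sqrt u *\<^sub>R Wf t"
    using mild[of t] t_range by (simp add: w_def)
  have alg: "alg2_iter grad u h R xn vn a (\<lambda>j. Wf (a j * h)) (Suc k) i
      = xn + ((1 - exp (- 2 * t)) / 2) *\<^sub>R vn
        - (u / 2) *\<^sub>R (\<Sum>j=1..i. integral (J j) w *\<^sub>R grad (alg2_iter grad u h R xn vn a (\<lambda>j. Wf (a j * h)) k j))
        + sqrt u *\<^sub>R Wf t"
    using i \<delta> by (simp add: h J_def w_def t_def)
  \<comment> \<open>The noise terms sqrt u * Wf t of the iterate and of the diffusion cancel.\<close>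
  show ?thesis
    unfolding t_def[symmetric] alg X_t by (simp add: J_def w_def sum_subtractf algebra_simps)
qed

lemma cell_integral_error_le:
  fixes grad :: "'a::euclidean_space \<Rightarrow> 'a" and X :: "real \<Rightarrow> 'a"
  assumes lip: "\<And>x y. norm (grad y - grad x) \<le> L * norm (y - x)" and L: "0 \<le> L"
    and grad_X: "continuous_on {0..t} (\<lambda>s. grad (X s))"
    and \<delta>: "0 < \<delta>" and j: "1 \<le> j" "j \<le> i"
    and t: "(real i - 1) * \<delta> \<le> t" "t \<le> h"
    and S: "\<And>s. s \<in> {(real j - 1) * \<delta> .. real j * \<delta>} \<Longrightarrow> norm (Y - X s) \<le> S"
  shows "norm (integral {(real j - 1) * \<delta> .. min (real j * \<delta>) t} (\<lambda>s. 1 - exp (- 2 * (t - s))) *\<^sub>R grad x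
      - integral {(real j - 1) * \<delta> .. min (real j * \<delta>) t} (\<lambda>s. (1 - exp (- 2 * (t - s))) *\<^sub>R grad (X s)))
    \<le> 2 * h * L * (norm (x - Y) + S) * \<delta>"
proof -
  have "(real j - 1) * \<delta> \<le> (real i - 1) * \<delta>" "(real j - 1) * \<delta> \<le> real j * \<delta>"
    using j \<delta> by (auto intro: mult_right_mono)
  then have cell: "(real j - 1) * \<delta> \<le> min (real j * \<delta>) t"
    using t(1) by (metis min.bounded_iff order_trans)
  have cell_nonneg: "0 \<le> (real j - 1) * \<delta>"
    using j \<delta> by simp
  show ?thesis
  proof (rule norm_integral_weighted_diff_le[OF cell])
    show "min (real j * \<delta>) t - (real j - 1) * \<delta> \<le> \<delta>"
      by (simp add: left_diff_distrib)
    show "continuous_on {(real j - 1) * \<delta> .. min (real j * \<delta>) t} (\<lambda>s. grad (X s))"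
      using cell_nonneg by (intro continuous_on_subset[OF grad_X]) auto
    fix s assume s: "s \<in> {(real j - 1) * \<delta> .. min (real j * \<delta>) t}"
    have "\<bar>1 - exp (- 2 * (t - s))\<bar> \<le> 2 * (t - s)"
      using s by (intro abs_one_minus_exp_le) auto
    also have "\<dots> \<le> 2 * h"
      using s cell_nonneg t(2) by auto
    moreover have "norm (grad x - grad (X s)) \<le> L * (norm (x - Y) + S)"
    proof -
      have "norm (grad x - grad (X s)) \<le> L * norm (x - X s)"
        using lip by (metis norm_minus_commute)
      also have "norm (x - X s) \<le> norm (x - Y) + S"
        using norm_triangle_ineq[of "x - Y" "Y - X s"] S[of s] s by auto
      finally show ?thesis
        using L by (simp add: mult_left_mono)
    qed
    ultimately show "\<bar>1 - exp (- 2 * (t - s))\<bar> * norm (grad x - grad (X s)) \<le> 2 * h * L * (norm (x - Y) + S)"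
      by (smt (verit) mult_mono abs_ge_zero norm_ge_zero mult.assoc)
  qed (intro continuous_intros)
qed

lemma alg2_iter_Suc_error_le:
  fixes grad :: "'a::euclidean_space \<Rightarrow> 'a" and X Wf :: "real \<Rightarrow> 'a" and a S :: "nat \<Rightarrow> real"
  assumes L_pos: "0 < L" and u: "u = 1 / L"
    and lip: "\<And>x y. norm (grad y - grad x) \<le> L * norm (y - x)"
    and cX: "continuous_on {0..h} X"
    and mild: "\<And>t. t \<in> {0..h} \<Longrightarrow> X t = xn + ((1 - exp (- 2 * t)) / 2) *\<^sub>R vn
          - (u / 2) *\<^sub>R integral {0..t} (\<lambda>s. (1 - exp (- 2 * (t - s))) *\<^sub>R grad (X s))
          + sqrt u *\<^sub>R Wf t"
    and \<delta>: "0 < \<delta>" and h: "h = real R * \<delta>"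
    and a: "\<And>j. j \<in> {1..R} \<Longrightarrow> a j * h \<in> {(real j - 1) * \<delta> .. real j * \<delta>}"
    and S: "\<And>j s. j \<in> {1..R} \<Longrightarrow> s \<in> {(real j - 1) * \<delta> .. real j * \<delta>} \<Longrightarrow>
      norm (X (a j * h) - X s) \<le> S j"
    and i: "i \<in> {1..R}"
  shows "norm (alg2_iter grad u h R xn vn a (\<lambda>j. Wf (a j * h)) (Suc k) i - X (a i * h))
    \<le> h * \<delta> * (\<Sum>j=1..R. norm (alg2_iter grad u h R xn vn a (\<lambda>j. Wf (a j * h)) k j - X (a j * h)) + S j)"
proof -
  define x where "x j = alg2_iter grad u h R xn vn a (\<lambda>j. Wf (a j * h)) k j" for j
  define e where "e j = norm (x j - X (a j * h))" for j
  define t where "t = a i * h"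
  define J where "J j = {(real j - 1) * \<delta> .. min (real j * \<delta>) t}" for j :: nat
  have t: "(real i - 1) * \<delta> \<le> t" "0 \<le> t" "t \<le> h"
    using a[OF i] cell_subset_horizon[OF i \<delta>] by (auto simp: h t_def)
  have grad_cont: "continuous_on UNIV grad"
    using lip L_pos by (intro lipschitz_on_continuous_on[of L UNIV]) (auto simp: lipschitz_on_def dist_norm)
  have grad_X: "continuous_on {0..t} (\<lambda>s. grad (X s))"
    using t by (intro continuous_on_compose2[OF grad_cont continuous_on_subset[OF cX]]) auto
  have "norm (alg2_iter grad u h R xn vn a (\<lambda>j. Wf (a j * h)) (Suc k) i - X t)
      = (u / 2) * norm (\<Sum>j=1..i. integral (J j) (\<lambda>s. 1 - exp (- 2 * (t - s))) *\<^sub>R grad (x j)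
          - integral (J j) (\<lambda>s. (1 - exp (- 2 * (t - s))) *\<^sub>R grad (X s)))"
    using alg2_iter_Suc_sub_mild[where a=a, OF grad_cont cX mild \<delta> h i a[OF i]] L_pos u
    by (simp add: t_def J_def x_def)
  also have "\<dots> \<le> (u / 2) * (\<Sum>j=1..i. 2 * h * L * (e j + S j) * \<delta>)"
    using L_pos u unfolding J_def e_def
    by (intro mult_left_mono order_trans[OF norm_sum sum_mono]
        cell_integral_error_le[OF lip _ grad_X \<delta> _ _ t(1,3)] S) (use i in auto)
  also have "\<dots> = h * \<delta> * (\<Sum>j=1..i. e j + S j)"
    unfolding sum_distrib_left by (intro sum.cong refl) (use L_pos in \<open>simp add: u field_simps\<close>)
  also have "\<dots> \<le> h * \<delta> * (\<Sum>j=1..R. e j + S j)"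
    using i t \<delta> S[OF _ a] by (intro mult_left_mono sum_mono2) (auto simp: e_def)
  finally show ?thesis
    by (simp add: t_def e_def x_def)
qed

text \<open>Stated for the majorant q * b k + C rather than for b (Suc k): the majorant also bounds
  each single squared error at step k + 1, not only their mean.\<close>

lemma affine_recursion_le:
  fixes b :: "nat \<Rightarrow> real"
  assumes step: "\<And>k. b (Suc k) \<le> q * b k + C"
    and q: "0 \<le> q" "q \<le> 1 / 2" and C: "0 \<le> C"
  shows "q * b k + C \<le> q ^ Suc k * b 0 + 2 * C"
proof (induction k)
  case 0
  show ?case
    using C by simp
next
  case (Suc k)
  have "q * b (Suc k) + C \<le> q * (q * b k + C) + C"
    using step[of k] q by (intro add_right_mono mult_left_mono) auto
  also have "\<dots> \<le> q * (q ^ Suc k * b 0 + 2 * C) + C"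
    using Suc.IH q by (intro add_right_mono mult_left_mono) auto
  also have "\<dots> \<le> q ^ Suc (Suc k) * b 0 + 2 * C"
    using mult_right_mono[OF q(2) C] by (simp add: algebra_simps)
  finally show ?case .
qed

lemma sq_le_of_le_cell_sum:
  fixes e S :: "nat \<Rightarrow> real"
  assumes x: "0 \<le> x" "x \<le> h * \<delta> * (\<Sum>j=1..R. e j + S j)"
    and R: "1 \<le> R" and h: "h = real R * \<delta>"
  shows "x\<^sup>2 \<le> 2 * (real R)^4 * \<delta>^4 * ((1 / real R) * (\<Sum>j=1..R. (e j)\<^sup>2))
    + 2 * (real R)^3 * \<delta>^4 * (\<Sum>j=1..R. (S j)\<^sup>2)"
proof -
  have "x\<^sup>2 \<le> (h * \<delta>)\<^sup>2 * (\<Sum>j=1..R. e j + S j)\<^sup>2"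
    using power_mono[OF x(2) x(1), of 2] by (simp add: power_mult_distrib)
  also have "\<dots> \<le> (h * \<delta>)\<^sup>2 * (real R * (\<Sum>j=1..R. (e j + S j)\<^sup>2))"
    using sum_squared_le_sum_of_squares[of "\<lambda>j. e j + S j" "{1..R}"]
    by (intro mult_left_mono) (auto simp: mult.commute)
  also have "\<dots> \<le> (h * \<delta>)\<^sup>2 * (real R * (\<Sum>j=1..R. 2 * (e j)\<^sup>2 + 2 * (S j)\<^sup>2))"
  proof -
    have "(e j + S j)\<^sup>2 \<le> 2 * (e j)\<^sup>2 + 2 * (S j)\<^sup>2" for j
    proof -
      have "(e j + S j)\<^sup>2 + (e j - S j)\<^sup>2 = 2 * (e j)\<^sup>2 + 2 * (S j)\<^sup>2"
        by (simp add: power2_eq_square algebra_simps)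
      then show ?thesis
        using zero_le_power2[of "e j - S j"] by linarith
    qed
    then show ?thesis
      by (intro mult_left_mono sum_mono) auto
  qed
  also have "\<dots> = 2 * (real R)^4 * \<delta>^4 * ((1 / real R) * (\<Sum>j=1..R. (e j)\<^sup>2))
      + 2 * (real R)^3 * \<delta>^4 * (\<Sum>j=1..R. (S j)\<^sup>2)"
  proof -
    have "(\<Sum>j=1..R. 2 * (e j)\<^sup>2 + 2 * (S j)\<^sup>2) = 2 * (\<Sum>j=1..R. (e j)\<^sup>2) + 2 * (\<Sum>j=1..R. (S j)\<^sup>2)"
      by (simp add: sum.distrib sum_distrib_left)
    then show ?thesis
      using R by (simp add: h field_simps power2_eq_square power4_eq_xxxx power3_eq_cube)
  qed
  finally show ?thesis .
qed

lemma alg2_iter_sq_error_le: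
  fixes grad :: "'a::euclidean_space \<Rightarrow> 'a" and X Wf :: "real \<Rightarrow> 'a" and a S :: "nat \<Rightarrow> real"
  assumes L_pos: "0 < L" and u: "u = 1 / L"
    and lip: "\<And>x y. norm (grad y - grad x) \<le> L * norm (y - x)"
    and cX: "continuous_on {0..h} X"
    and mild: "\<And>t. t \<in> {0..h} \<Longrightarrow> X t = xn + ((1 - exp (- 2 * t)) / 2) *\<^sub>R vn
          - (u / 2) *\<^sub>R integral {0..t} (\<lambda>s. (1 - exp (- 2 * (t - s))) *\<^sub>R grad (X s))
          + sqrt u *\<^sub>R Wf t"
    and R: "1 \<le> R" and \<delta>: "0 < \<delta>" and h: "h = real R * \<delta>"
    and small: "(real R)^4 * \<delta>^4 \<le> 1 / 4"
    and a: "\<And>j. j \<in> {1..R} \<Longrightarrow> a j * h \<in> {(real j - 1) * \<delta> .. real j * \<delta>}"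
    and S: "\<And>j s. j \<in> {1..R} \<Longrightarrow> s \<in> {(real j - 1) * \<delta> .. real j * \<delta>} \<Longrightarrow>
      norm (X (a j * h) - X s) \<le> S j"
    and i: "i \<in> {1..R}" and k: "1 \<le> k"
  shows "(norm (alg2_iter grad u h R xn vn a (\<lambda>j. Wf (a j * h)) k i - X (a i * h)))\<^sup>2
    \<le> (2 * (real R)^4 * \<delta>^4) ^ k * (1 / real R) * (\<Sum>j=1..R. (norm (xn - X (a j * h)))\<^sup>2)
      + 4 * (real R)^3 * \<delta>^4 * (\<Sum>j=1..R. (S j)\<^sup>2)"
proof -
  define e where "e k j = norm (alg2_iter grad u h R xn vn a (\<lambda>j. Wf (a j * h)) k j - X (a j * h))"
    for k j
  define q where "q = 2 * (real R)^4 * \<delta>^4"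
  define C where "C = 2 * (real R)^3 * \<delta>^4 * (\<Sum>j=1..R. (S j)\<^sup>2)"
  define b where "b k = (1 / real R) * (\<Sum>j=1..R. (e k j)\<^sup>2)" for k
  have step: "(e (Suc k) i)\<^sup>2 \<le> q * b k + C" if "i \<in> {1..R}" for k i
    unfolding q_def b_def C_def e_def
    by (rule sq_le_of_le_cell_sum[OF norm_ge_zero
          alg2_iter_Suc_error_le[OF L_pos u lip cX mild \<delta> h a S that] R h])
  have "b (Suc k) \<le> q * b k + C" for k
  proof -
    have "(\<Sum>i=1..R. (e (Suc k) i)\<^sup>2) \<le> (\<Sum>i=1..R. q * b k + C)"
      by (intro sum_mono step) auto
    then show ?thesis
      using R by (simp add: b_def[of "Suc k"] field_simps)
  qed
  moreover have "0 \<le> C"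
    unfolding C_def using \<delta> by (intro mult_nonneg_nonneg sum_nonneg) auto
  moreover have "0 \<le> q" "q \<le> 1 / 2"
    using small by (auto simp: q_def)
  ultimately have majorant: "q * b k' + C \<le> q ^ Suc k' * b 0 + 2 * C" for k'
    by (intro affine_recursion_le)
  obtain k' where "k = Suc k'"
    using k by (cases k) auto
  then have "(e k i)\<^sup>2 \<le> q ^ k * b 0 + 2 * C"
    using step[OF i, of k'] majorant[of k'] by simp
  then show ?thesis
    by (simp add: e_def q_def b_def C_def)
qed

lemma alg2_iter_sq_error_le_SUP:
  fixes grad :: "'a::euclidean_space \<Rightarrow> 'a" and X Wf :: "real \<Rightarrow> 'a" and a :: "nat \<Rightarrow> real"
  assumes L_pos: "0 < L" and u: "u = 1 / L"
    and lip: "\<And>x y. norm (grad y - grad x) \<le> L * norm (y - x)"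
    and cX: "continuous_on {0..h} X"
    and mild: "\<And>t. t \<in> {0..h} \<Longrightarrow> X t = xn + ((1 - exp (- 2 * t)) / 2) *\<^sub>R vn
          - (u / 2) *\<^sub>R integral {0..t} (\<lambda>s. (1 - exp (- 2 * (t - s))) *\<^sub>R grad (X s))
          + sqrt u *\<^sub>R Wf t"
    and R: "1 \<le> R" and \<delta>: "0 < \<delta>" and h: "h = real R * \<delta>"
    and small: "(real R)^4 * \<delta>^4 \<le> 1 / 4"
    and a: "\<And>j. j \<in> {1..R} \<Longrightarrow> a j * h \<in> {(real j - 1) * \<delta> .. real j * \<delta>}"
    and i: "i \<in> {1..R}" and k: "1 \<le> k"
  shows "ennreal ((norm (alg2_iter grad u h R xn vn a (\<lambda>j. Wf (a j * h)) k i - X (a i * h)))\<^sup>2)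
    \<le> ennreal ((2 * (real R)^4 * \<delta>^4) ^ k) * ennreal (1 / real R)
        * (\<Sum>j=1..R. ennreal ((norm (xn - X (a j * h)))\<^sup>2))
      + ennreal (4 * (real R)^3 * \<delta>^4)
        * (\<Sum>j=1..R. SUP s\<in>{(real j - 1) * \<delta> .. real j * \<delta>}. ennreal ((norm (X (a j * h) - X s))\<^sup>2))"
proof -
  define I where "I j = {(real j - 1) * \<delta> .. real j * \<delta>}" for j :: nat
  \<comment> \<open>The oscillation on each cell is attained, so the real bound applies with S j := its maximum.\<close>
  have "\<exists>s\<in>I j. \<forall>y\<in>I j. norm (X (a j * h) - X y) \<le> norm (X (a j * h) - X s)"
    if j: "j \<in> {1..R}" for j
  proof (rule continuous_attains_sup)
    show "compact (I j)" "I j \<noteq> {}"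
      using \<delta> by (auto simp: I_def)
    have "I j \<subseteq> {0..h}"
      using j \<delta> by (auto simp: I_def h)
    then show "continuous_on (I j) (\<lambda>y. norm (X (a j * h) - X y))"
      by (intro continuous_intros continuous_on_subset[OF cX])
  qed
  then obtain s_max where s_max: "\<And>j. j \<in> {1..R} \<Longrightarrow> s_max j \<in> I j"
    "\<And>j y. j \<in> {1..R} \<Longrightarrow> y \<in> I j \<Longrightarrow> norm (X (a j * h) - X y) \<le> norm (X (a j * h) - X (s_max j))"
    by metis
  define S where "S j = norm (X (a j * h) - X (s_max j))" for j
  define q where "q = (2 * (real R)^4 * \<delta>^4) ^ k"
  define c where "c = 4 * (real R)^3 * \<delta>^4"
  have "(norm (alg2_iter grad u h R xn vn a (\<lambda>j. Wf (a j * h)) k i - X (a i * h)))\<^sup>2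
    \<le> q * (1 / real R) * (\<Sum>j=1..R. (norm (xn - X (a j * h)))\<^sup>2) + c * (\<Sum>j=1..R. (S j)\<^sup>2)"
    unfolding q_def c_def
    by (rule alg2_iter_sq_error_le[OF L_pos u lip cX mild R \<delta> h small a _ i k])
      (use s_max in \<open>auto simp: S_def I_def\<close>)
  then have "ennreal ((norm (alg2_iter grad u h R xn vn a (\<lambda>j. Wf (a j * h)) k i - X (a i * h)))\<^sup>2)
    \<le> ennreal (q * (1 / real R) * (\<Sum>j=1..R. (norm (xn - X (a j * h)))\<^sup>2) + c * (\<Sum>j=1..R. (S j)\<^sup>2))"
    by (rule ennreal_leI)
  also have "\<dots> = ennreal q * ennreal (1 / real R) * (\<Sum>j=1..R. ennreal ((norm (xn - X (a j * h)))\<^sup>2))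
      + ennreal c * (\<Sum>j=1..R. ennreal ((S j)\<^sup>2))"
  proof -
    have "0 \<le> q" "0 \<le> c"
      using \<delta> by (auto simp: q_def c_def)
    then show ?thesis
      by (simp only: ennreal_plus ennreal_mult mult_nonneg_nonneg sum_nonneg sum_ennreal
          zero_le_divide_1_iff of_nat_0_le_iff zero_le_power2)
  qed
  also have "\<dots> \<le> ennreal q * ennreal (1 / real R) * (\<Sum>j=1..R. ennreal ((norm (xn - X (a j * h)))\<^sup>2))
      + ennreal c * (\<Sum>j=1..R. SUP s\<in>I j. ennreal ((norm (X (a j * h) - X s))\<^sup>2))"
    unfolding S_def using s_max(1) by (intro add_mono mult_left_mono sum_mono SUP_upper) auto
  finally show ?thesis
    by (simp add: q_def c_def I_def)
qed

section \<open>Measurability and integration\<close>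

lemma floor_grid_tendsto:
  fixes c h :: real
  assumes h: "0 < h"
  shows "(\<lambda>n. real_of_int \<lfloor>real (Suc n) * c / h\<rfloor> * h / real (Suc n)) \<longlonglongrightarrow> c"
proof (rule tendsto_sandwich[where f="\<lambda>n. c - h / real (Suc n)" and h="\<lambda>n. c"])
  have scale: "y * h / real (Suc n) = y * (h / real (Suc n))" for y n
    by simp
  have cell: "c - h / real (Suc n) = (real (Suc n) * c / h - 1) * (h / real (Suc n))"
    "c = (real (Suc n) * c / h) * (h / real (Suc n))" for n
    using h by (simp_all add: left_diff_distrib diff_divide_distrib)
  show "\<forall>\<^sub>F n in sequentially. c - h / real (Suc n) \<le> real_of_int \<lfloor>real (Suc n) * c / h\<rfloor> * h / real (Suc n)"
    using h unfolding scale cell(1) by (intro always_eventually allI mult_right_mono) (linarith, simp)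
  show "\<forall>\<^sub>F n in sequentially. real_of_int \<lfloor>real (Suc n) * c / h\<rfloor> * h / real (Suc n) \<le> c"
  proof (intro always_eventually allI)
    fix n
    have "real_of_int \<lfloor>real (Suc n) * c / h\<rfloor> * (h / real (Suc n))
        \<le> (real (Suc n) * c / h) * (h / real (Suc n))"
      using h by (intro mult_right_mono) simp_all
    also have "\<dots> = c"
      by (rule cell(2)[symmetric])
    finally show "real_of_int \<lfloor>real (Suc n) * c / h\<rfloor> * h / real (Suc n) \<le> c"
      by (simp only: scale)
  qed
  show "(\<lambda>n. c - h / real (Suc n)) \<longlonglongrightarrow> c"
    using tendsto_diff[OF tendsto_const[of c] LIMSEQ_Suc[OF lim_const_over_n[of h]]] by simp
qed simp

lemma borel_measurable_process_at_random_time: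
  fixes X :: "real \<Rightarrow> 'w \<Rightarrow> 'a::euclidean_space"
  assumes h: "0 < h" and c: "c \<in> borel_measurable M" and c_range: "\<And>\<omega>. \<omega> \<in> space M \<Longrightarrow> c \<omega> \<in> {0..h}"
    and X_meas: "\<And>t. t \<in> {0..h} \<Longrightarrow> X t \<in> borel_measurable M"
    and X_cont: "\<And>\<omega>. \<omega> \<in> space M \<Longrightarrow> continuous_on {0..h} (\<lambda>t. X t \<omega>)"
  shows "(\<lambda>\<omega>. X (c \<omega>) \<omega>) \<in> borel_measurable M"
proof -
  define grid where "grid n m = max 0 (min h (real_of_int m * h / real (Suc n)))" for n :: nat and m :: int
  define idx where "idx n \<omega> = \<lfloor>real (Suc n) * c \<omega> / h\<rfloor>" for n \<omega>
  have grid_range: "grid n m \<in> {0..h}" for n m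
    using h by (auto simp: grid_def)
  have "idx n \<in> measurable M (count_space UNIV)" for n
    unfolding idx_def using c by (intro measurable_compose[OF _ measurable_real_floor]) simp
  then have approx_meas: "(\<lambda>\<omega>. X (grid n (idx n \<omega>)) \<omega>) \<in> borel_measurable M" for n
    by (intro measurable_compose_countable'[where I=UNIV, OF X_meas[OF grid_range]]) auto
  show ?thesis
  proof (rule borel_measurable_LIMSEQ_metric[OF approx_meas])
    fix \<omega> assume \<omega>: "\<omega> \<in> space M"
    have "(\<lambda>n. grid n (idx n \<omega>)) \<longlonglongrightarrow> max 0 (min h (c \<omega>))"
      unfolding grid_def idx_def by (intro tendsto_intros floor_grid_tendsto h)
    then have "(\<lambda>n. grid n (idx n \<omega>)) \<longlonglongrightarrow> c \<omega>"
      using c_range[OF \<omega>] by simp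
    then show "(\<lambda>n. X (grid n (idx n \<omega>)) \<omega>) \<longlonglongrightarrow> X (c \<omega>) \<omega>"
      using c_range[OF \<omega>] grid_range
      by (intro continuous_on_tendsto_compose[OF X_cont[OF \<omega>]]) auto
  qed
qed

lemma SUP_interval_eq_SUP_dense:
  fixes \<phi> :: "real \<Rightarrow> real"
  assumes ab: "a \<le> b" and \<phi>: "continuous_on {a..b} \<phi>"
  shows "(SUP s\<in>{a..b}. ennreal (\<phi> s)) = (SUP s\<in>insert a (insert b ({a<..<b} \<inter> \<rat>)). ennreal (\<phi> s))"
proof (rule antisym)
  let ?D = "insert a (insert b ({a<..<b} \<inter> \<rat>))"
  show "(SUP s\<in>{a..b}. ennreal (\<phi> s)) \<le> (SUP s\<in>?D. ennreal (\<phi> s))"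
  proof (rule SUP_least)
    fix s assume s: "s \<in> {a..b}"
    show "ennreal (\<phi> s) \<le> (SUP s\<in>?D. ennreal (\<phi> s))"
    proof (cases "s \<in> {a<..<b}")
      case False
      then show ?thesis
        using s by (intro SUP_upper) auto
    next
      case True
      then have "s \<in> closure ({a<..<b} \<inter> \<rat>)"
        using open_Int_closure_subset[of "{a<..<b}" \<rat>] by (auto simp: Rats_closure_real)
      then obtain r where r: "\<And>n. r n \<in> {a<..<b} \<inter> \<rat>" and "r \<longlonglongrightarrow> s"
        unfolding closure_sequential by blast
      then have "(\<lambda>n. ennreal (\<phi> (r n))) \<longlonglongrightarrow> ennreal (\<phi> s)"
        using s by (intro tendsto_ennrealI continuous_on_tendsto_compose[OF \<phi>])
          (auto intro!: always_eventually simp: less_imp_le)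
      then show ?thesis
        by (rule LIMSEQ_le_const2) (intro exI[of _ 0] allI impI SUP_upper, use r in auto)
    qed
  qed
  show "(SUP s\<in>?D. ennreal (\<phi> s)) \<le> (SUP s\<in>{a..b}. ennreal (\<phi> s))"
    using ab by (intro SUP_subset_mono) auto
qed

lemma borel_measurable_SUP_continuous:
  fixes F :: "real \<Rightarrow> 'w \<Rightarrow> real"
  assumes ab: "a \<le> b" and F_meas: "\<And>s. s \<in> {a..b} \<Longrightarrow> F s \<in> borel_measurable M"
    and F_cont: "\<And>\<omega>. \<omega> \<in> space M \<Longrightarrow> continuous_on {a..b} (\<lambda>s. F s \<omega>)"
  shows "(\<lambda>\<omega>. SUP s\<in>{a..b}. ennreal (F s \<omega>)) \<in> borel_measurable M"
proof -
  define D where "D = insert a (insert b ({a<..<b} \<inter> \<rat>))"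
  have "countable D"
    unfolding D_def by (intro countable_insert countable_Int2 countable_rat)
  moreover have "D \<subseteq> {a..b}"
    using ab by (auto simp: D_def)
  ultimately have "(\<lambda>\<omega>. SUP s\<in>D. ennreal (F s \<omega>)) \<in> borel_measurable M"
    using F_meas by (intro borel_measurable_SUP) auto
  moreover have "(SUP s\<in>{a..b}. ennreal (F s \<omega>)) = (SUP s\<in>D. ennreal (F s \<omega>))" if "\<omega> \<in> space M" for \<omega>
    unfolding D_def using ab F_cont[OF that] by (rule SUP_interval_eq_SUP_dense)
  ultimately show ?thesis
    by (subst measurable_cong) auto
qed

lemma nn_integral_le_weighted_sums_AE:
  fixes F :: "'w \<Rightarrow> ennreal" and f g f' g' :: "'i \<Rightarrow> 'w \<Rightarrow> ennreal"
  assumes J: "finite J"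
    and f': "\<And>j. j \<in> J \<Longrightarrow> f' j \<in> borel_measurable M"
    and g': "\<And>j. j \<in> J \<Longrightarrow> g' j \<in> borel_measurable M"
    and ae_eq: "AE \<omega> in M. \<forall>j\<in>J. f j \<omega> = f' j \<omega> \<and> g j \<omega> = g' j \<omega>"
    and bound: "AE \<omega> in M. F \<omega> \<le> p * (\<Sum>j\<in>J. f j \<omega>) + q * (\<Sum>j\<in>J. g j \<omega>)"
  shows "(\<integral>\<^sup>+\<omega>. F \<omega> \<partial>M) \<le> p * (\<Sum>j\<in>J. \<integral>\<^sup>+\<omega>. f j \<omega> \<partial>M) + q * (\<Sum>j\<in>J. \<integral>\<^sup>+\<omega>. g j \<omega> \<partial>M)"
proof -
  have "(\<integral>\<^sup>+\<omega>. F \<omega> \<partial>M) \<le> (\<integral>\<^sup>+\<omega>. p * (\<Sum>j\<in>J. f' j \<omega>) + q * (\<Sum>j\<in>J. g' j \<omega>) \<partial>M)"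
    using ae_eq bound by (intro nn_integral_mono_AE) (auto elim!: AE_mp)
  also have "\<dots> = p * (\<Sum>j\<in>J. \<integral>\<^sup>+\<omega>. f' j \<omega> \<partial>M) + q * (\<Sum>j\<in>J. \<integral>\<^sup>+\<omega>. g' j \<omega> \<partial>M)"
    using J f' g' by (simp add: nn_integral_add nn_integral_cmult nn_integral_sum borel_measurable_sum)
  also have "(\<Sum>j\<in>J. \<integral>\<^sup>+\<omega>. f' j \<omega> \<partial>M) = (\<Sum>j\<in>J. \<integral>\<^sup>+\<omega>. f j \<omega> \<partial>M)"
    using ae_eq by (auto intro!: sum.cong nn_integral_cong_AE elim: AE_mp)
  also have "(\<Sum>j\<in>J. \<integral>\<^sup>+\<omega>. g' j \<omega> \<partial>M) = (\<Sum>j\<in>J. \<integral>\<^sup>+\<omega>. g j \<omega> \<partial>M)"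
    using ae_eq by (auto intro!: sum.cong nn_integral_cong_AE elim: AE_mp)
  finally show ?thesis .
qed

lemma AE_in_interval_of_distr_uniform:
  fixes X :: "'w \<Rightarrow> real"
  assumes "X \<in> borel_measurable M" and "distr M lborel X = uniform_measure lborel {a..b}"
  shows "AE \<omega> in M. X \<omega> \<in> {a..b}"
proof -
  have "AE x in distr M lborel X. x \<in> {a..b}"
    unfolding assms(2) by (rule AE_uniform_measureI) auto
  then show ?thesis
    by (rule AE_distrD[rotated]) (use assms(1) in simp)
qed

lemma AE_scaled_uniform_in_cells:
  fixes \<alpha> :: "nat \<Rightarrow> 'w \<Rightarrow> real"
  assumes meas: "\<And>j. j \<in> {1..R} \<Longrightarrow> \<alpha> j \<in> borel_measurable M"
    and unif: "\<And>j. j \<in> {1..R} \<Longrightarrow>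
      distr M lborel (\<alpha> j) = uniform_measure lborel {(real j - 1) / real R .. real j / real R}"
    and R: "1 \<le> R" and \<delta>: "0 \<le> \<delta>"
  shows "AE \<omega> in M. \<forall>j\<in>{1..R}. \<alpha> j \<omega> * (real R * \<delta>) \<in> {(real j - 1) * \<delta> .. real j * \<delta>}"
proof (subst AE_ball_countable, simp, intro ballI)
  fix j assume j: "j \<in> {1..R}"
  have "x * (real R * \<delta>) \<in> {(real j - 1) * \<delta> .. real j * \<delta>}"
    if "x \<in> {(real j - 1) / real R .. real j / real R}" for x
  proof -
    have "real j - 1 \<le> real R * x" "real R * x \<le> real j"
      using that R by (auto simp: field_simps)
    then have "(real j - 1) * \<delta> \<le> real R * x * \<delta>" "real R * x * \<delta> \<le> real j * \<delta>"
      using \<delta> by (meson mult_right_mono)+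
    then show ?thesis
      by (simp add: mult_ac)
  qed
  with AE_in_interval_of_distr_uniform[OF meas[OF j] unif[OF j]]
  show "AE \<omega> in M. \<alpha> j \<omega> * (real R * \<delta>) \<in> {(real j - 1) * \<delta> .. real j * \<delta>}"
    by (auto elim: AE_mp)
qed

lemma nn_integral_le_sums_at_random_times:
  fixes X :: "real \<Rightarrow> 'w \<Rightarrow> 'a::euclidean_space" and \<tau> :: "'i \<Rightarrow> 'w \<Rightarrow> real" and a b :: "'i \<Rightarrow> real"
  assumes h: "0 < h" and J: "finite J"
    and X_meas: "\<And>t. t \<in> {0..h} \<Longrightarrow> X t \<in> borel_measurable M"
    and X_cont: "\<And>\<omega>. \<omega> \<in> space M \<Longrightarrow> continuous_on {0..h} (\<lambda>t. X t \<omega>)"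
    and \<tau>_meas: "\<And>j. j \<in> J \<Longrightarrow> \<tau> j \<in> borel_measurable M"
    and cells: "\<And>j. j \<in> J \<Longrightarrow> 0 \<le> a j \<and> a j \<le> b j \<and> b j \<le> h"
    and \<tau>_cells: "AE \<omega> in M. \<forall>j\<in>J. \<tau> j \<omega> \<in> {a j..b j}"
    and bound: "AE \<omega> in M. F \<omega> \<le> p * (\<Sum>j\<in>J. ennreal ((norm (x0 - X (\<tau> j \<omega>) \<omega>))\<^sup>2))
      + q * (\<Sum>j\<in>J. SUP s\<in>{a j..b j}. ennreal ((norm (X (\<tau> j \<omega>) \<omega> - X s \<omega>))\<^sup>2))"
  shows "(\<integral>\<^sup>+\<omega>. F \<omega> \<partial>M) \<le> p * (\<Sum>j\<in>J. \<integral>\<^sup>+\<omega>. ennreal ((norm (x0 - X (\<tau> j \<omega>) \<omega>))\<^sup>2) \<partial>M)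
      + q * (\<Sum>j\<in>J. \<integral>\<^sup>+\<omega>. (SUP s\<in>{a j..b j}. ennreal ((norm (X (\<tau> j \<omega>) \<omega> - X s \<omega>))\<^sup>2)) \<partial>M)"
proof -
  \<comment> \<open>X is only known to be measurable on [0, h]: clamping the random times into [0, h]
    makes the integrands measurable and changes them only on a null set.\<close>
  define T where "T j \<omega> = max 0 (min h (\<tau> j \<omega>))" for j \<omega>
  have X_T: "(\<lambda>\<omega>. X (T j \<omega>) \<omega>) \<in> borel_measurable M" if "j \<in> J" for j
  proof (rule borel_measurable_process_at_random_time[where h=h, OF h _ _ X_meas X_cont])
    show "T j \<in> borel_measurable M"
      unfolding T_def using \<tau>_meas[OF that] by measurable
  qed (use h in \<open>auto simp: T_def\<close>)
  show ?thesis
  proof (rule nn_integral_le_weighted_sums_AE[OF J _ _ _ bound, where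
        f' = "\<lambda>j \<omega>. ennreal ((norm (x0 - X (T j \<omega>) \<omega>))\<^sup>2)"
        and g' = "\<lambda>j \<omega>. SUP s\<in>{a j..b j}. ennreal ((norm (X (T j \<omega>) \<omega> - X s \<omega>))\<^sup>2)"])
    show "(\<lambda>\<omega>. ennreal ((norm (x0 - X (T j \<omega>) \<omega>))\<^sup>2)) \<in> borel_measurable M" if "j \<in> J" for j
      using X_T[OF that] by measurable
    show "(\<lambda>\<omega>. SUP s\<in>{a j..b j}. ennreal ((norm (X (T j \<omega>) \<omega> - X s \<omega>))\<^sup>2)) \<in> borel_measurable M"
      if j: "j \<in> J" for j
    proof (rule borel_measurable_SUP_continuous)
      show "a j \<le> b j"
        using cells[OF j] by simp
      show "(\<lambda>\<omega>. (norm (X (T j \<omega>) \<omega> - X s \<omega>))\<^sup>2) \<in> borel_measurable M" if "s \<in> {a j..b j}" for s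
        using X_T[OF j] X_meas[of s] cells[OF j] that by auto
      show "continuous_on {a j..b j} (\<lambda>s. (norm (X (T j \<omega>) \<omega> - X s \<omega>))\<^sup>2)" if "\<omega> \<in> space M" for \<omega>
        using X_cont[OF that] cells[OF j] by (auto intro!: continuous_intros intro: continuous_on_subset)
    qed
    show "AE \<omega> in M. \<forall>j\<in>J. ennreal ((norm (x0 - X (\<tau> j \<omega>) \<omega>))\<^sup>2) = ennreal ((norm (x0 - X (T j \<omega>) \<omega>))\<^sup>2)
      \<and> (SUP s\<in>{a j..b j}. ennreal ((norm (X (\<tau> j \<omega>) \<omega> - X s \<omega>))\<^sup>2))
        = (SUP s\<in>{a j..b j}. ennreal ((norm (X (T j \<omega>) \<omega> - X s \<omega>))\<^sup>2))"
      using \<tau>_cells by eventually_elim (use cells in \<open>fastforce simp: T_def\<close>)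
  qed
qed

theorem lemma13:
  fixes f :: "'a::euclidean_space \<Rightarrow> real"
    and grad :: "'a \<Rightarrow> 'a"
    and Hf :: "'a \<Rightarrow> ('a \<Rightarrow>\<^sub>L 'a)"
    and m L u h \<delta> :: real
    and R K k i :: nat
    and M :: "'w measure"
    and B :: "real \<Rightarrow> 'w \<Rightarrow> 'a"
    and \<alpha> :: "nat \<Rightarrow> 'w \<Rightarrow> real"
    and xn vn :: 'a
    and xs vs :: "real \<Rightarrow> 'w \<Rightarrow> 'a"
  assumes grad_f: "\<And>x. (f has_derivative (\<lambda>w. grad x \<bullet> w)) (at x)"
    and hess_f: "\<And>x. (grad has_derivative blinfun_apply (Hf x)) (at x)"
    and hess_cont: "continuous_on UNIV Hf"
    and m_pos: "0 < m"
    and hess_lower: "\<And>x w. m * (norm w)\<^sup>2 \<le> blinfun_apply (Hf x) w \<bullet> w"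
    and hess_upper: "\<And>x w. blinfun_apply (Hf x) w \<bullet> w \<le> L * (norm w)\<^sup>2"
    and u_def: "u = 1 / L"
    and R_ge: "1 \<le> R"
    and delta_pos: "0 < \<delta>"
    and h_def: "h = real R * \<delta>"
    and small: "(real R)^4 * \<delta>^4 \<le> 1 / 4"
    and BM: "std_brownian_motion M h B"
    and alpha_unif: "\<And>j. j \<in> {1..R} \<Longrightarrow>
           distr M lborel (\<alpha> j) = uniform_measure lborel {(real j - 1) / real R .. real j / real R}"
    and alpha_indep: "prob_space.indep_vars M (\<lambda>_. lborel) \<alpha> {1..R}"
    and alpha_B_indep: "prob_space.indep_set M
           (sigma_sets (space M) (\<Union>j\<in>{1..R}. {\<alpha> j -` A \<inter> space M | A. A \<in> sets borel}))
           (sigma_sets (space M) (\<Union>t\<in>{0..h}. {B t -` A \<inter> space M | A. A \<in> sets borel}))"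
    and diff_meas: "\<And>t. t \<in> {0..h} \<Longrightarrow> xs t \<in> borel_measurable M \<and> vs t \<in> borel_measurable M"
    and diff_cont: "\<And>\<omega>. \<omega> \<in> space M \<Longrightarrow>
           continuous_on {0..h} (\<lambda>t. xs t \<omega>) \<and> continuous_on {0..h} (\<lambda>t. vs t \<omega>)"
    and diff_x: "\<And>\<omega> t. \<omega> \<in> space M \<Longrightarrow> t \<in> {0..h} \<Longrightarrow>
           xs t \<omega> = xn + integral {0..t} (\<lambda>s. vs s \<omega>)"
    and diff_v: "\<And>\<omega> t. \<omega> \<in> space M \<Longrightarrow> t \<in> {0..h} \<Longrightarrow>
           vs t \<omega> = vn - integral {0..t} (\<lambda>s. 2 *\<^sub>R vs s \<omega> + u *\<^sub>R grad (xs s \<omega>))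
                      + (2 * sqrt u) *\<^sub>R B t \<omega>"
    and i_range: "i \<in> {1..R}"
    and k_range: "1 \<le> k" "k \<le> K - 1"
  shows "(\<integral>\<^sup>+\<omega>. ennreal ((norm (alg2_iter grad u h R xn vn (\<lambda>j. \<alpha> j \<omega>)
                              (\<lambda>j. W1 (\<lambda>s. B s \<omega>) (\<alpha> j \<omega> * h)) k i
                            - xs (\<alpha> i \<omega> * h) \<omega>))\<^sup>2) \<partial>M)
         \<le> ennreal ((2 * (real R)^4 * \<delta>^4) ^ k) * ennreal (1 / real R) *
             (\<Sum>j=1..R. \<integral>\<^sup>+\<omega>. ennreal ((norm (xn - xs (\<alpha> j \<omega> * h) \<omega>))\<^sup>2) \<partial>M)
           + ennreal (4 * (real R)^3 * \<delta>^4) *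
             (\<Sum>j=1..R. \<integral>\<^sup>+\<omega>. (SUP s\<in>{(real j - 1) * \<delta> .. real j * \<delta>}.
                  ennreal ((norm (xs (\<alpha> j \<omega> * h) \<omega> - xs s \<omega>))\<^sup>2)) \<partial>M)"
proof -
  interpret prob_space M
    using BM by (simp add: std_brownian_motion_def)
  note L_pos = hessian_bounds_grad_lipschitz(1)[OF grad_f hess_f hess_lower m_pos hess_upper]
  note lip = hessian_bounds_grad_lipschitz(2)[OF grad_f hess_f hess_lower m_pos hess_upper]
  have grad_cont: "continuous_on UNIV grad"
    by (intro continuous_at_imp_continuous_on ballI has_derivative_continuous[OF hess_f])
  have \<alpha>_meas: "\<alpha> j \<in> borel_measurable M" if "j \<in> {1..R}" for j
    using alpha_indep that unfolding indep_vars_def by auto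
  have cells: "AE \<omega> in M. \<forall>j\<in>{1..R}. \<alpha> j \<omega> * h \<in> {(real j - 1) * \<delta> .. real j * \<delta>}"
    unfolding h_def using delta_pos by (intro AE_scaled_uniform_in_cells[OF \<alpha>_meas alpha_unif R_ge]) auto
  have bound: "AE \<omega> in M. ennreal ((norm (alg2_iter grad u h R xn vn (\<lambda>j. \<alpha> j \<omega>)
          (\<lambda>j. W1 (\<lambda>s. B s \<omega>) (\<alpha> j \<omega> * h)) k i - xs (\<alpha> i \<omega> * h) \<omega>))\<^sup>2)
      \<le> ennreal ((2 * (real R)^4 * \<delta>^4) ^ k) * ennreal (1 / real R)
          * (\<Sum>j=1..R. ennreal ((norm (xn - xs (\<alpha> j \<omega> * h) \<omega>))\<^sup>2))
        + ennreal (4 * (real R)^3 * \<delta>^4)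
          * (\<Sum>j=1..R. SUP s\<in>{(real j - 1) * \<delta> .. real j * \<delta>}.
              ennreal ((norm (xs (\<alpha> j \<omega> * h) \<omega> - xs s \<omega>))\<^sup>2))"
    (is "AE \<omega> in M. ?bound \<omega>")
    using cells
  proof (rule AE_mp, intro AE_I2 impI)
    fix \<omega> assume \<omega>: "\<omega> \<in> space M" and cell: "\<forall>j\<in>{1..R}. \<alpha> j \<omega> * h \<in> {(real j - 1) * \<delta> .. real j * \<delta>}"
    have mild: "xs t \<omega> = xn + ((1 - exp (- 2 * t)) / 2) *\<^sub>R vn
        - (u / 2) *\<^sub>R integral {0..t} (\<lambda>s. (1 - exp (- 2 * (t - s))) *\<^sub>R grad (xs s \<omega>))
        + sqrt u *\<^sub>R W1 (\<lambda>s. B s \<omega>) t" if "t \<in> {0..h}" for t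
      using BM \<omega> diff_cont[OF \<omega>] diff_x[OF \<omega>] diff_v[OF \<omega>] that
      by (intro langevin_position_mild_form[where V="\<lambda>t. vs t \<omega>" and b="\<lambda>t. B t \<omega>", OF grad_cont])
        (auto simp: std_brownian_motion_def)
    show "?bound \<omega>"
      using diff_cont[OF \<omega>] cell
      by (intro alg2_iter_sq_error_le_SUP[where X="\<lambda>t. xs t \<omega>" and a="\<lambda>j. \<alpha> j \<omega>",
            OF L_pos u_def lip _ mild R_ge delta_pos h_def small _ i_range k_range(1)]) auto
  qed
  have "0 \<le> (real j - 1) * \<delta> \<and> (real j - 1) * \<delta> \<le> real j * \<delta> \<and> real j * \<delta> \<le> h"
    if "j \<in> {1..R}" for j
    using that delta_pos by (auto simp: h_def intro: mult_right_mono)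
  moreover have "0 < h"
    using R_ge delta_pos h_def by simp
  ultimately show ?thesis
    using diff_meas diff_cont \<alpha>_meas
    by (intro nn_integral_le_sums_at_random_times[where h=h, OF _ _ _ _ _ _ cells bound]) auto
qed

end
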